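(* Let $d,T\ge 1$, let $0<b<c$, and let $x_1,\dots,x_T\in\mathbb{R}^d$ and $y_1,\dots,y_T\in\mathbb{R}$ be arbitrary. Assume the labels are bounded: $\sup_t |y_t|\le Y$ for some $Y\in\mathbb{R}$. Let $\hat y_1,\dots,\hat y_T$ be the predictions of the LASER algorithm (defined in the context). Then \[ \sum_{t=1}^T (y_t-\hat y_t)^2 \;\le\; \min_{u_1,\dots,u_T\in\mathbb{R}^d}\Big[\, b\|u_1\|^2 + c\sum_{t=1}^{T-1}\|u_t-u_{t+1}\|^2 + \sum_{t=1}^T (x_t^\top u_t - y_t)^2 \Big] \;+\; Y^2\sum_{t=1}^T x_t^\top D_t^{-1}x_t . \]
   Context: LASER algorithm: with parameters $0<b<c$, set $D_0=\frac{bc}{c-b}I\in\mathbb{R}^{d\times d}$ and $e_0=0\in\mathbb{R}^d$. For $t=1,\dots,T$: after receiving $x_t$, compute $D_t=\big(D_{t-1}^{-1}+c^{-1}I\big)^{-1}+x_tx_t^\top$; output the prediction $\hat y_t = x_t^\top D_t^{-1}\big(I+c^{-1}D_{t-1}\big)^{-1}e_{t-1}$; after receiving $y_t$, set $e_t=\big(I+c^{-1}D_{t-1}\big)^{-1}e_{t-1}+y_tx_t$. Here $I$ is the $d\times d$ identity and $\|\cdot\|$ the Euclidean norm. *)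

theory Defs
  imports "HOL-Analysis.Analysis"
begin

definition outer_self :: "real^'n \<Rightarrow> real^'n^'n" where
  "outer_self v = (\<chi> i j. v $ i * v $ j)"

text \<open>The LASER matrices D_t (t = 0,1,...); inputs x_1, x_2, ... are x 1, x 2, ...\<close>
fun laser_D :: "real \<Rightarrow> real \<Rightarrow> (nat \<Rightarrow> real^'n) \<Rightarrow> nat \<Rightarrow> real^'n^'n" where
  "laser_D b c x 0 = mat (b * c / (c - b))"
| "laser_D b c x (Suc t) =
     matrix_inv (matrix_inv (laser_D b c x t) + mat (1 / c)) + outer_self (x (Suc t))"

fun laser_e :: "real \<Rightarrow> real \<Rightarrow> (nat \<Rightarrow> real^'n) \<Rightarrow> (nat \<Rightarrow> real) \<Rightarrow> nat \<Rightarrow> real^'n" where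
  "laser_e b c x y 0 = 0"
| "laser_e b c x y (Suc t) =
     matrix_inv (mat 1 + (1 / c) *\<^sub>R laser_D b c x t) *v laser_e b c x y t + y (Suc t) *\<^sub>R x (Suc t)"

definition laser_pred :: "real \<Rightarrow> real \<Rightarrow> (nat \<Rightarrow> real^'n) \<Rightarrow> (nat \<Rightarrow> real) \<Rightarrow> nat \<Rightarrow> real" where
  "laser_pred b c x y t =
     x t \<bullet> (matrix_inv (laser_D b c x t) *v
              (matrix_inv (mat 1 + (1 / c) *\<^sub>R laser_D b c x (t - 1)) *v laser_e b c x y (t - 1)))"

end

theory Submission imports Defs begin

text \<open>
The proof tracks the potential
  \<open>\<Phi>\<^sub>t(w) = (w - D\<^sub>t\<^sup>-\<^sup>1 e\<^sub>t)\<^sup>T D\<^sub>t (w - D\<^sub>t\<^sup>-\<^sup>1 e\<^sub>t)\<close>,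
which up to a constant is the regularised loss of a comparator ending in \<open>w\<close>.
Each round splits into two steps. Forgetting: minimising \<open>\<Phi>\<^sub>t(v) + c\<parallel>v - w\<parallel>\<^sup>2\<close> over \<open>v\<close>
is an infimal convolution of two quadratics and yields the quadratic with matrix
\<open>(D\<^sub>t\<^sup>-\<^sup>1 + c\<^sup>-\<^sup>1 I)\<^sup>-\<^sup>1\<close>. Updating: adding the rank-one term \<open>x x\<^sup>T\<close> and the new loss
costs the learner at most \<open>Y\<^sup>2 x\<^sup>T D\<^sup>-\<^sup>1 x\<close> beyond the comparator's loss, by a
Sherman-Morrison computation. Telescoping over the rounds and dropping the final
nonnegative potential gives the bound; the free starting point \<open>u\<^sub>0 = (1 - b/c) u\<^sub>1\<close>
absorbs the initial matrix \<open>D\<^sub>0 = bc/(c-b) I\<close> into \<open>b\<parallel>u\<^sub>1\<parallel>\<^sup>2\<close>.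
\<close>

definition symmetric_matrix :: "real^'n^'n \<Rightarrow> bool" where
  "symmetric_matrix M \<longleftrightarrow> transpose M = M"

definition pos_def_matrix :: "real^'n^'n \<Rightarrow> bool" where
  "pos_def_matrix M \<longleftrightarrow> (\<forall>v. v \<noteq> 0 \<longrightarrow> 0 < v \<bullet> (M *v v))"

lemma symmetric_matrix_inner:
  "symmetric_matrix M \<Longrightarrow> v \<bullet> (M *v w) = (M *v v) \<bullet> w"
  by (metis dot_lmul_matrix symmetric_matrix_def transpose_matrix_vector)

lemma matrix_inv_mult:
  fixes M :: "real^'n^'n"
  assumes "invertible M"
  shows matrix_mult_inv_right: "M ** matrix_inv M = mat 1"
    and matrix_mult_inv_left: "matrix_inv M ** M = mat 1"
proof -
  have "\<exists>N. M ** N = mat 1 \<and> N ** M = mat 1" using assms invertible_def by blast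
  from someI_ex[OF this] show "M ** matrix_inv M = mat 1" "matrix_inv M ** M = mat 1"
    unfolding matrix_inv_def by auto
qed

lemma matrix_inv_vector_mult:
  fixes M :: "real^'n^'n"
  assumes "invertible M"
  shows matrix_vector_mult_inv_right: "M *v (matrix_inv M *v v) = v"
    and matrix_vector_mult_inv_left: "matrix_inv M *v (M *v v) = v"
  by (simp_all add: matrix_vector_mul_assoc matrix_inv_mult[OF assms])

lemma matrix_inv_matrix_inv:
  fixes M :: "real^'n^'n"
  assumes "invertible M"
  shows "matrix_inv (matrix_inv M) = M"
proof -
  let ?N = "matrix_inv M"
  have "invertible ?N"
    using matrix_inv_mult[OF assms] invertible_def by blast
  then have "matrix_inv ?N = matrix_inv ?N ** (?N ** M)"
    by (simp add: matrix_mult_inv_left[OF assms])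
  also have "\<dots> = M"
    by (simp add: matrix_mul_assoc matrix_mult_inv_left[OF \<open>invertible ?N\<close>])
  finally show ?thesis .
qed

lemma mat_vector_mult: "(mat k :: real^'n^'n) *v v = k *\<^sub>R v"
  by (simp add: vec_eq_iff matrix_vector_mult_def mat_def if_distrib if_distribR
      cong del: if_weak_cong)

lemma outer_self_vector_mult: "outer_self x *v v = (x \<bullet> v) *\<^sub>R x"
  by (simp add: vec_eq_iff matrix_vector_mult_def outer_self_def inner_vec_def
      sum_distrib_left mult_ac)

lemma symmetric_matrix_mat: "symmetric_matrix (mat k)"
  by (simp add: symmetric_matrix_def)

lemma symmetric_matrix_outer_self: "symmetric_matrix (outer_self x)"
  by (simp add: symmetric_matrix_def outer_self_def transpose_def vec_eq_iff mult.commute)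

lemma symmetric_matrix_add:
  "symmetric_matrix A \<Longrightarrow> symmetric_matrix B \<Longrightarrow> symmetric_matrix (A + B)"
  by (simp add: symmetric_matrix_def transpose_def vec_eq_iff)

lemma symmetric_matrix_inv:
  fixes M :: "real^'n^'n"
  assumes "symmetric_matrix M" "invertible M"
  shows "symmetric_matrix (matrix_inv M)"
proof -
  let ?N = "matrix_inv M"
  have "transpose ?N = transpose ?N ** (M ** ?N)"
    by (simp add: matrix_mult_inv_right[OF assms(2)])
  also have "\<dots> = transpose (M ** ?N) ** ?N"
    using assms(1) by (simp add: symmetric_matrix_def matrix_mul_assoc matrix_transpose_mul)
  also have "\<dots> = ?N" by (simp add: matrix_mult_inv_right[OF assms(2)])
  finally show ?thesis unfolding symmetric_matrix_def .
qed

lemma pos_def_matrix_nonneg: "pos_def_matrix A \<Longrightarrow> 0 \<le> v \<bullet> (A *v v)"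
  unfolding pos_def_matrix_def by (cases "v = 0") (auto intro: less_imp_le)

lemma pos_def_matrix_mat: "0 < k \<Longrightarrow> pos_def_matrix (mat k)"
  unfolding pos_def_matrix_def by (simp add: mat_vector_mult)

lemma pos_def_matrix_add_nonneg:
  "pos_def_matrix A \<Longrightarrow> (\<And>v. 0 \<le> v \<bullet> (B *v v)) \<Longrightarrow> pos_def_matrix (A + B)"
  unfolding pos_def_matrix_def
  by (simp add: matrix_vector_mult_add_rdistrib inner_add_right add_pos_nonneg)

lemma pos_def_matrix_add_outer_self:
  "pos_def_matrix A \<Longrightarrow> pos_def_matrix (A + outer_self x)"
proof (rule pos_def_matrix_add_nonneg)
  show "0 \<le> v \<bullet> (outer_self x *v v)" for v
    by (simp add: outer_self_vector_mult inner_commute[of v x])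
qed

lemma pos_def_matrix_invertible:
  fixes M :: "real^'n^'n"
  assumes "pos_def_matrix M"
  shows "invertible M"
proof -
  have "\<forall>v. M *v v = 0 \<longrightarrow> v = 0"
    using assms unfolding pos_def_matrix_def by (metis inner_zero_right less_irrefl)
  then show ?thesis using invertible_left_inverse matrix_left_invertible_ker by blast
qed

lemma pos_def_matrix_inv:
  fixes M :: "real^'n^'n"
  assumes "pos_def_matrix M"
  shows "pos_def_matrix (matrix_inv M)"
  unfolding pos_def_matrix_def
proof (intro allI impI)
  fix v :: "real^'n"
  assume "v \<noteq> 0"
  let ?w = "matrix_inv M *v v"
  have Mw: "M *v ?w = v"
    using matrix_vector_mult_inv_right[OF pos_def_matrix_invertible[OF assms]] .
  with \<open>v \<noteq> 0\<close> have "?w \<noteq> 0" by auto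
  with assms have "0 < ?w \<bullet> (M *v ?w)" unfolding pos_def_matrix_def by blast
  then show "0 < v \<bullet> ?w" using Mw by (simp add: inner_commute)
qed

lemma spd_inv_add_mat:
  fixes D :: "real^'n^'n"
  assumes "symmetric_matrix D" "pos_def_matrix D" "0 < c"
  shows "symmetric_matrix (matrix_inv D + mat (1/c))"
    and "pos_def_matrix (matrix_inv D + mat (1/c))"
  using assms pos_def_matrix_invertible
  by (auto intro!: symmetric_matrix_add symmetric_matrix_inv symmetric_matrix_mat
      pos_def_matrix_add_nonneg pos_def_matrix_inv simp: mat_vector_mult)

lemma spd_inv_inv_add_mat:
  fixes D :: "real^'n^'n"
  assumes "symmetric_matrix D" "pos_def_matrix D" "0 < c"
  shows "symmetric_matrix (matrix_inv (matrix_inv D + mat (1/c)))"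
    and "pos_def_matrix (matrix_inv (matrix_inv D + mat (1/c)))"
  using spd_inv_add_mat[OF assms] pos_def_matrix_invertible
  by (auto intro: symmetric_matrix_inv pos_def_matrix_inv)

text \<open>The minimum of \<open>p\<^sup>T D p + c\<parallel>p - q\<parallel>\<^sup>2\<close> over \<open>p\<close> is attained at
  \<open>p = D\<^sup>-\<^sup>1 s\<close> with \<open>s = (D\<^sup>-\<^sup>1 + c\<^sup>-\<^sup>1 I)\<^sup>-\<^sup>1 q\<close>; the two squares completed below
  vanish exactly there.\<close>

lemma inf_convolution_quadratic:
  fixes D :: "real^'n^'n"
  assumes D: "symmetric_matrix D" "pos_def_matrix D" and c: "0 < c"
  shows "q \<bullet> (matrix_inv (matrix_inv D + mat (1/c)) *v q) \<le> p \<bullet> (D *v p) + c * (norm (p - q))\<^sup>2"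
proof -
  let ?M = "matrix_inv D + mat (1/c)"
  have iD: "invertible D" using pos_def_matrix_invertible D(2) .
  have iM: "invertible ?M" using pos_def_matrix_invertible spd_inv_add_mat(2)[OF D c] .
  define s where "s = matrix_inv ?M *v q"
  define r where "r = matrix_inv D *v s"
  have Dr: "D *v r = s" unfolding r_def using matrix_vector_mult_inv_right[OF iD] .
  have qs: "q \<bullet> s = r \<bullet> s + (1/c) * (s \<bullet> s)"
  proof -
    have "q = r + (1/c) *\<^sub>R s"
      using matrix_vector_mult_inv_right[OF iM, of q]
      unfolding s_def r_def by (simp add: matrix_vector_mult_add_rdistrib mat_vector_mult)
    then show ?thesis by (simp add: inner_add_left)
  qed
  have "0 \<le> (p - r) \<bullet> (D *v (p - r))" using pos_def_matrix_nonneg[OF D(2)] .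
  also have "\<dots> = p \<bullet> (D *v p) - 2 * (p \<bullet> s) + r \<bullet> s"
    using symmetric_matrix_inner[OF D(1), of r p] Dr
    by (simp add: matrix_vector_mult_diff_distrib inner_diff_left inner_diff_right inner_commute)
  finally have 1: "0 \<le> p \<bullet> (D *v p) - 2 * (p \<bullet> s) + r \<bullet> s" .
  have "0 \<le> c * (norm ((q - p) - (1/c) *\<^sub>R s))\<^sup>2" using c by simp
  also have "\<dots> = c * (norm (p - q))\<^sup>2 - 2 * ((q - p) \<bullet> s) + (1/c) * (s \<bullet> s)"
    using c by (simp add: power2_norm_eq_inner inner_diff_left inner_diff_right inner_commute
        algebra_simps)
  finally have 2: "0 \<le> c * (norm (p - q))\<^sup>2 - 2 * ((q - p) \<bullet> s) + (1/c) * (s \<bullet> s)" .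
  show ?thesis using 1 2 qs unfolding s_def[symmetric]
    by (simp add: inner_diff_left inner_commute[of q s])
qed

lemma rank_one_update_inner_le:
  fixes A :: "real^'n^'n" and x z :: "real^'n"
  assumes A: "symmetric_matrix A" "pos_def_matrix A"
  defines "g \<equiv> matrix_inv (A + outer_self x) *v z"
  shows "(x \<bullet> g)\<^sup>2 + z \<bullet> g \<le> z \<bullet> (matrix_inv A *v z)"
proof -
  let ?Ai = "matrix_inv A"
  define P where "P = x \<bullet> g"
  define K where "K = x \<bullet> (?Ai *v x)"
  have iA: "invertible A" using pos_def_matrix_invertible A(2) .
  have iDn: "invertible (A + outer_self x)"
    using pos_def_matrix_invertible pos_def_matrix_add_outer_self A(2) by blast
  have sAi: "symmetric_matrix ?Ai" using symmetric_matrix_inv[OF A(1) iA] .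
  have "A *v g + P *\<^sub>R x = z"
    using matrix_vector_mult_inv_right[OF iDn, of z]
    unfolding g_def P_def by (simp add: matrix_vector_mult_add_rdistrib outer_self_vector_mult)
  then have Aiz: "?Ai *v z = g + P *\<^sub>R (?Ai *v x)"
    using matrix_vector_mult_inv_left[OF iA, of g]
    by (metis matrix_vector_mult_scaleR matrix_vector_right_distrib)
  have "x \<bullet> (?Ai *v z) = P + P * K"
    unfolding Aiz P_def K_def by (simp add: inner_add_right)
  moreover have "z \<bullet> (?Ai *v z) = z \<bullet> g + P * (x \<bullet> (?Ai *v z))"
    using symmetric_matrix_inner[OF sAi, of z x] by (simp add: Aiz inner_add_right inner_commute)
  moreover have "0 \<le> K" unfolding K_def using pos_def_matrix_nonneg pos_def_matrix_inv A(2) .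
  ultimately show ?thesis unfolding P_def[symmetric]
    by (simp add: power2_eq_square algebra_simps)
qed

text \<open>The centre \<open>D\<^sup>-\<^sup>1 e\<close> is the minimiser of \<open>w\<^sup>T D w - 2 w\<^sup>T e\<close>.\<close>

definition quad_potential :: "real^'n^'n \<Rightarrow> real^'n \<Rightarrow> real^'n \<Rightarrow> real" where
  "quad_potential D e w = (w - matrix_inv D *v e) \<bullet> (D *v (w - matrix_inv D *v e))"

lemma quad_potential_nonneg: "pos_def_matrix D \<Longrightarrow> 0 \<le> quad_potential D e w"
  unfolding quad_potential_def by (rule pos_def_matrix_nonneg)

lemma quad_potential_expand:
  assumes "symmetric_matrix D" "invertible D"
  shows "quad_potential D e w = w \<bullet> (D *v w) - 2 * (w \<bullet> e) + e \<bullet> (matrix_inv D *v e)"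
  unfolding quad_potential_def
  using symmetric_matrix_inner[OF assms(1), of "matrix_inv D *v e" w]
    matrix_vector_mult_inv_right[OF assms(2), of e]
  by (simp add: matrix_vector_mult_diff_distrib inner_diff_left inner_diff_right inner_commute)

text \<open>The rescaled vector \<open>(I + c\<^sup>-\<^sup>1 D)\<^sup>-\<^sup>1 e\<close> is chosen so that the new
  quadratic keeps the centre \<open>D\<^sup>-\<^sup>1 e\<close>, since \<open>D\<^sup>-\<^sup>1 + c\<^sup>-\<^sup>1 I = D\<^sup>-\<^sup>1 (I + c\<^sup>-\<^sup>1 D)\<close>.\<close>

lemma quad_potential_forget:
  fixes D :: "real^'n^'n"
  assumes D: "symmetric_matrix D" "pos_def_matrix D" and c: "0 < c"
  shows "quad_potential (matrix_inv (matrix_inv D + mat (1/c)))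
           (matrix_inv (mat 1 + (1/c) *\<^sub>R D) *v e) w
         \<le> quad_potential D e v + c * (norm (v - w))\<^sup>2"
proof -
  let ?M = "matrix_inv D + mat (1/c)"
  let ?N = "mat 1 + (1/c) *\<^sub>R D"
  define m where "m = matrix_inv D *v e"
  have iD: "invertible D" using pos_def_matrix_invertible D(2) .
  have iM: "invertible ?M" using pos_def_matrix_invertible spd_inv_add_mat(2)[OF D c] .
  have "pos_def_matrix ?N"
  proof (rule pos_def_matrix_add_nonneg[OF pos_def_matrix_mat])
    show "0 \<le> v \<bullet> ((1/c) *\<^sub>R D *v v)" for v
      using pos_def_matrix_nonneg[OF D(2), of v] c
      by (simp add: scaleR_matrix_vector_assoc[symmetric])
  qed simp
  then have iN: "invertible ?N" using pos_def_matrix_invertible by blast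
  have centre: "?M *v (matrix_inv ?N *v e) = m"
  proof -
    let ?z = "matrix_inv ?N *v e"
    have "?M *v ?z = matrix_inv D *v (?z + (1/c) *\<^sub>R (D *v ?z))"
      using matrix_vector_mult_inv_left[OF iD, of ?z]
      by (simp add: matrix_vector_mult_add_rdistrib matrix_vector_right_distrib
          matrix_vector_mult_scaleR mat_vector_mult)
    also have "?z + (1/c) *\<^sub>R (D *v ?z) = e"
      using matrix_vector_mult_inv_right[OF iN, of e]
      by (simp add: matrix_vector_mult_add_rdistrib scaleR_matrix_vector_assoc[symmetric])
    finally show ?thesis unfolding m_def .
  qed
  have "(w - m) \<bullet> (matrix_inv ?M *v (w - m)) \<le> (v - m) \<bullet> (D *v (v - m)) + c * (norm (v - w))\<^sup>2"
    using inf_convolution_quadratic[OF D c, of "w - m" "v - m"] by simp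
  then show ?thesis
    unfolding quad_potential_def matrix_inv_matrix_inv[OF iM] centre m_def by simp
qed

text \<open>After expanding both potentials the comparator terms cancel, and what
  remains, with \<open>g = D\<^sup>-\<^sup>1 z\<close>, is \<open>(x\<^sup>T g)\<^sup>2 + z\<^sup>T g - z\<^sup>T A\<^sup>-\<^sup>1 z + (y\<^sup>2 - Y\<^sup>2) x\<^sup>T D\<^sup>-\<^sup>1 x \<le> 0\<close>.\<close>

lemma quad_potential_update:
  fixes A :: "real^'n^'n" and x z w :: "real^'n" and y Y :: real
  assumes A: "symmetric_matrix A" "pos_def_matrix A" and yY: "y\<^sup>2 \<le> Y\<^sup>2"
  defines "D \<equiv> A + outer_self x"
  shows "(y - x \<bullet> (matrix_inv D *v z))\<^sup>2 - Y\<^sup>2 * (x \<bullet> (matrix_inv D *v x))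
           + quad_potential D (z + y *\<^sub>R x) w
         \<le> quad_potential A z w + (x \<bullet> w - y)\<^sup>2"
proof -
  let ?Di = "matrix_inv D"
  define g where "g = ?Di *v z"
  define R where "R = x \<bullet> (?Di *v x)"
  have sD: "symmetric_matrix D"
    unfolding D_def using symmetric_matrix_add[OF A(1) symmetric_matrix_outer_self] .
  have pD: "pos_def_matrix D" unfolding D_def using pos_def_matrix_add_outer_self[OF A(2)] .
  have iD: "invertible D" using pos_def_matrix_invertible pD .
  have iA: "invertible A" using pos_def_matrix_invertible A(2) .
  have zx: "z \<bullet> (?Di *v x) = x \<bullet> g"
    using symmetric_matrix_inner[OF symmetric_matrix_inv[OF sD iD], of z x]
    unfolding g_def by (simp add: inner_commute)
  have "quad_potential D (z + y *\<^sub>R x) w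
      = w \<bullet> (A *v w) + (x \<bullet> w)\<^sup>2 - 2 * (w \<bullet> z + y * (x \<bullet> w))
        + (z \<bullet> g + 2 * y * (x \<bullet> g) + y\<^sup>2 * R)"
    unfolding quad_potential_expand[OF sD iD] g_def R_def
    using zx[unfolded g_def]
    by (simp add: D_def matrix_vector_mult_add_rdistrib matrix_vector_right_distrib
        matrix_vector_mult_scaleR outer_self_vector_mult inner_add_left inner_add_right
        inner_commute power2_eq_square algebra_simps)
  moreover have "quad_potential A z w = w \<bullet> (A *v w) - 2 * (w \<bullet> z) + z \<bullet> (matrix_inv A *v z)"
    using quad_potential_expand[OF A(1) iA] .
  moreover have "(x \<bullet> g)\<^sup>2 + z \<bullet> g \<le> z \<bullet> (matrix_inv A *v z)"
    unfolding g_def D_def using rank_one_update_inner_le[OF A] .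
  moreover have "(y\<^sup>2 - Y\<^sup>2) * R \<le> 0"
    using yY pos_def_matrix_nonneg[OF pos_def_matrix_inv[OF pD]]
    unfolding R_def by (simp add: mult_nonpos_nonneg)
  ultimately show ?thesis unfolding g_def[symmetric] R_def[symmetric]
    by (simp add: power2_eq_square algebra_simps)
qed

lemma laser_D_spd:
  assumes "0 < b" "b < c"
  shows "symmetric_matrix (laser_D b c x t) \<and> pos_def_matrix (laser_D b c x t)"
proof (induction t)
  case 0
  from assms have "0 < b * c / (c - b)" by simp
  then show ?case by (simp add: symmetric_matrix_mat pos_def_matrix_mat)
next
  case (Suc t)
  with assms show ?case
    using spd_inv_inv_add_mat[of "laser_D b c x t" c]
    by (simp add: symmetric_matrix_add symmetric_matrix_outer_self pos_def_matrix_add_outer_self)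
qed

lemma laser_potential_invariant:
  fixes x u :: "nat \<Rightarrow> real^'d" and y :: "nat \<Rightarrow> real"
  assumes "0 < b" "b < c"
  shows "(\<forall>s\<in>{1..t}. (y s)\<^sup>2 \<le> Y\<^sup>2) \<Longrightarrow>
      (\<Sum>s = 1..t. (y s - laser_pred b c x y s)\<^sup>2 - Y\<^sup>2 * (x s \<bullet> (matrix_inv (laser_D b c x s) *v x s)))
      + quad_potential (laser_D b c x t) (laser_e b c x y t) (u t)
    \<le> (b * c / (c - b)) * (norm (u 0))\<^sup>2 + c * (\<Sum>s<t. (norm (u s - u (Suc s)))\<^sup>2)
      + (\<Sum>s = 1..t. (x s \<bullet> u s - y s)\<^sup>2)"
proof (induction t)
  case 0
  then show ?case by (simp add: quad_potential_def mat_vector_mult power2_norm_eq_inner)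
next
  case (Suc t)
  have D: "symmetric_matrix (laser_D b c x t)" "pos_def_matrix (laser_D b c x t)"
    using laser_D_spd[OF assms] by auto
  from assms have c: "0 < c" by simp
  from Suc.prems have yY: "(y (Suc t))\<^sup>2 \<le> Y\<^sup>2" by simp
  let ?A = "matrix_inv (matrix_inv (laser_D b c x t) + mat (1/c))"
  let ?z = "matrix_inv (mat 1 + (1/c) *\<^sub>R laser_D b c x t) *v laser_e b c x y t"
  have "(y (Suc t) - laser_pred b c x y (Suc t))\<^sup>2
      - Y\<^sup>2 * (x (Suc t) \<bullet> (matrix_inv (laser_D b c x (Suc t)) *v x (Suc t)))
      + quad_potential (laser_D b c x (Suc t)) (laser_e b c x y (Suc t)) (u (Suc t))
    \<le> quad_potential ?A ?z (u (Suc t)) + (x (Suc t) \<bullet> u (Suc t) - y (Suc t))\<^sup>2"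
    using quad_potential_update[OF spd_inv_inv_add_mat[OF D c] yY, of "x (Suc t)" ?z "u (Suc t)"]
    by (simp add: laser_pred_def)
  also have "quad_potential ?A ?z (u (Suc t))
      \<le> quad_potential (laser_D b c x t) (laser_e b c x y t) (u t) + c * (norm (u t - u (Suc t)))\<^sup>2"
    using quad_potential_forget[OF D c] .
  finally show ?case using Suc by (simp add: distrib_left)
qed

lemma laser_regret_bound_from_start:
  fixes x u :: "nat \<Rightarrow> real^'d" and y :: "nat \<Rightarrow> real"
  assumes "0 < b" "b < c" and "\<forall>s\<in>{1..T}. (y s)\<^sup>2 \<le> Y\<^sup>2"
  shows "(\<Sum>s = 1..T. (y s - laser_pred b c x y s)\<^sup>2)
    \<le> (b * c / (c - b)) * (norm (u 0))\<^sup>2 + c * (\<Sum>s<T. (norm (u s - u (Suc s)))\<^sup>2)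
      + (\<Sum>s = 1..T. (x s \<bullet> u s - y s)\<^sup>2)
      + Y\<^sup>2 * (\<Sum>s = 1..T. x s \<bullet> (matrix_inv (laser_D b c x s) *v x s))"
proof -
  have "0 \<le> quad_potential (laser_D b c x T) (laser_e b c x y T) (u T)"
    using quad_potential_nonneg laser_D_spd[OF assms(1,2)] by blast
  with laser_potential_invariant[OF assms(1,2) assms(3), where x = x and u = u] show ?thesis
    by (simp add: sum_subtractf sum_distrib_left)
qed

lemma initial_regulariser_eq:
  fixes v :: "'a::real_normed_vector"
  assumes "0 < b" "b < c"
  shows "b * c / (c - b) * (norm (((c - b) / c) *\<^sub>R v))\<^sup>2
           + c * (norm (((c - b) / c) *\<^sub>R v - v))\<^sup>2 = b * (norm v)\<^sup>2"
proof -
  have "(c - b) / c - 1 = - b / c" using assms by (simp add: field_simps)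
  then have "((c - b) / c) *\<^sub>R v - v = (- b / c) *\<^sub>R v"
    by (metis scaleR_left_diff_distrib scaleR_one)
  then have n1: "norm (((c - b) / c) *\<^sub>R v - v) = b / c * norm v"
    using assms by simp
  have n0: "norm (((c - b) / c) *\<^sub>R v) = (c - b) / c * norm v"
    using assms by simp
  show ?thesis
    unfolding n0 n1 using assms by (simp add: field_simps power2_eq_square)
qed

theorem theorem4:
  fixes b c Y :: real and T :: nat
    and x :: "nat \<Rightarrow> real^'d" and y :: "nat \<Rightarrow> real"
  assumes "T \<ge> 1" and "0 < b" and "b < c"
    and "\<forall>t\<in>{1..T}. \<bar>y t\<bar> \<le> Y"
  shows "\<forall>u :: nat \<Rightarrow> real^'d.
           (\<Sum>t = 1..T. (y t - laser_pred b c x y t)\<^sup>2)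
           \<le> b * (norm (u 1))\<^sup>2 + c * (\<Sum>t = 1..<T. (norm (u t - u (Suc t)))\<^sup>2)
             + (\<Sum>t = 1..T. (x t \<bullet> u t - y t)\<^sup>2)
             + Y\<^sup>2 * (\<Sum>t = 1..T. x t \<bullet> (matrix_inv (laser_D b c x t) *v x t))"
proof
  fix u :: "nat \<Rightarrow> real^'d"
  define u' where "u' = u(0 := ((c - b) / c) *\<^sub>R u 1)"
  have "\<forall>s\<in>{1..T}. (y s)\<^sup>2 \<le> Y\<^sup>2"
  proof
    fix s assume "s \<in> {1..T}"
    with assms(4) have "\<bar>y s\<bar> \<le> \<bar>Y\<bar>" by fastforce
    then show "(y s)\<^sup>2 \<le> Y\<^sup>2" by (simp add: abs_le_square_iff)
  qed
  note bound = laser_regret_bound_from_start[OF assms(2,3) this, of x u']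
  have "(\<Sum>s<T. (norm (u' s - u' (Suc s)))\<^sup>2)
      = (norm (u' 0 - u 1))\<^sup>2 + (\<Sum>t = 1..<T. (norm (u t - u (Suc t)))\<^sup>2)"
    using assms(1) by (simp add: lessThan_atLeast0 sum.atLeast_Suc_lessThan u'_def)
  moreover have "(\<Sum>s = 1..T. (x s \<bullet> u' s - y s)\<^sup>2) = (\<Sum>t = 1..T. (x t \<bullet> u t - y t)\<^sup>2)"
    by (rule sum.cong) (auto simp: u'_def)
  ultimately show "(\<Sum>t = 1..T. (y t - laser_pred b c x y t)\<^sup>2)
           \<le> b * (norm (u 1))\<^sup>2 + c * (\<Sum>t = 1..<T. (norm (u t - u (Suc t)))\<^sup>2)
             + (\<Sum>t = 1..T. (x t \<bullet> u t - y t)\<^sup>2)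
             + Y\<^sup>2 * (\<Sum>t = 1..T. x t \<bullet> (matrix_inv (laser_D b c x t) *v x t))"
    using bound initial_regulariser_eq[OF assms(2,3), of "u 1"]
    by (simp add: u'_def distrib_left)
qed

end
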